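(* Let $\langle I_n:n\in\omega\rangle$ be a sequence of $\sigma$-ideals on a set $X$ with $I_{n+1}\subseteq I_n$ for all $n$, and let $I=\bigcap_n I_n$. Suppose that for each $m\in\omega$ there is a Galois–Tukey morphism from $\mathbf{Cof}(I_m)$ to $\mathbf{Lc}(\omega,2^{\mathrm{id}})$. Then there is a Galois–Tukey morphism from $\mathbf{Cof}(I)$ to $\mathbf{Lc}(\omega,2^{\mathrm{id}})$.
   Context: A relational system is a triple $(A,B,R)$ with $R\subseteq A\times B$. A Galois–Tukey morphism from $(A,B,R)$ to $(A',B',S)$ is a pair $(\varphi,\psi)$ with $\varphi\colon A\to A'$, $\psi\colon B'\to B$ such that for all $x\in A$, $y\in B'$: $\varphi(x)\,S\,y$ implies $x\,R\,\psi(y)$. For an ideal $J$, $\mathbf{Cof}(J)=(J,J,\subseteq)$. $\mathbf{Lc}(\omega,2^{\mathrm{id}})=(\omega^\omega,S,\in^* )$ where $S=\prod_{n\in\omega}[\omega]^{\le 2^n}$ is the set of sequences $\phi$ with $\phi(n)\subseteq\omega$, $|\phi(n)|\le2^n$, and $x\in^*\phi$ iff $x(n)\in\phi(n)$ for all but finitely many $n$. *)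

theory Defs
  imports Main "HOL-Library.Countable_Set"
begin

type_synonym ('a, 'b) relsys = "'a set \<times> 'b set \<times> ('a \<Rightarrow> 'b \<Rightarrow> bool)"

definition GT_morphism_exists :: "('a, 'b) relsys \<Rightarrow> ('c, 'd) relsys \<Rightarrow> bool" where
  "GT_morphism_exists AR AS \<longleftrightarrow>
     (case AR of (A, B, R) \<Rightarrow> case AS of (A', B', S) \<Rightarrow>
       (\<exists>\<phi> \<psi>. (\<forall>x\<in>A. \<phi> x \<in> A') \<and> (\<forall>y\<in>B'. \<psi> y \<in> B) \<and>
          (\<forall>x\<in>A. \<forall>y\<in>B'. S (\<phi> x) y \<longrightarrow> R x (\<psi> y))))"

definition sigma_ideal :: "'x set \<Rightarrow> 'x set set \<Rightarrow> bool" where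
  "sigma_ideal X J \<longleftrightarrow>
     J \<subseteq> Pow X \<and>
     (\<forall>A\<in>J. \<forall>B. B \<subseteq> A \<longrightarrow> B \<in> J) \<and>
     (\<forall>F. countable F \<and> F \<subseteq> J \<longrightarrow> \<Union>F \<in> J) \<and>
     X \<notin> J"

definition Cof :: "'x set set \<Rightarrow> ('x set, 'x set) relsys" where
  "Cof J = (J, J, (\<subseteq>))"

definition slaloms :: "(nat \<Rightarrow> nat set) set" where
  "slaloms = {\<phi>. \<forall>n. finite (\<phi> n) \<and> card (\<phi> n) \<le> 2 ^ n}"

definition in_star :: "(nat \<Rightarrow> nat) \<Rightarrow> (nat \<Rightarrow> nat set) \<Rightarrow> bool" where
  "in_star x \<phi> \<longleftrightarrow> (\<exists>N. \<forall>n\<ge>N. x n \<in> \<phi> n)"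

definition Lc_2id :: "(nat \<Rightarrow> nat, nat \<Rightarrow> nat set) relsys" where
  "Lc_2id = (UNIV, slaloms, in_star)"

end

theory Submission
  imports Defs
begin

text \<open>Countably many reals \<open>f m\<close> are predicted at once: code them into the single real whose
  \<open>n\<close>-th value lists \<open>f 0 n, \<dots>, f n n\<close>. A slalom capturing the code projects, coordinate by
  coordinate, to slaloms capturing every \<open>f m\<close>. Given morphisms \<open>(\<Phi> m, \<Psi> m)\<close> for the ideals
  \<open>I\<^sub>m\<close>, send \<open>A \<in> I\<close> to the code of the \<open>\<Phi> m A\<close> and a slalom \<open>S\<close> to \<open>\<Inter>m. \<Psi> m (S\<^sub>m)\<close>, which
  lies in every \<open>I\<^sub>n\<close> because it is below \<open>\<Psi> n (S\<^sub>n) \<in> I\<^sub>n\<close>.\<close>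

lemma GT_morphism_exists_Cof_Lc_2id_iff:
  "GT_morphism_exists (Cof J) Lc_2id \<longleftrightarrow>
     (\<exists>\<phi> \<psi>. (\<forall>S\<in>slaloms. \<psi> S \<in> J) \<and>
        (\<forall>A\<in>J. \<forall>S\<in>slaloms. in_star (\<phi> A) S \<longrightarrow> A \<subseteq> \<psi> S))"
  by (auto simp: GT_morphism_exists_def Cof_def Lc_2id_def)

lemma image_slalom_in_slaloms:
  assumes "S \<in> slaloms"
  shows "(\<lambda>n. g ` S n) \<in> slaloms"
proof -
  have "finite (S n)" "card (S n) \<le> 2 ^ n" for n
    using assms by (auto simp: slaloms_def)
  then show ?thesis
    unfolding slaloms_def using card_image_le le_trans by blast
qed

definition diag_code :: "(nat \<Rightarrow> nat \<Rightarrow> nat) \<Rightarrow> nat \<Rightarrow> nat" where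
  "diag_code f n = to_nat (map (\<lambda>m. f m n) [0..<Suc n])"

definition slalom_proj :: "nat \<Rightarrow> (nat \<Rightarrow> nat set) \<Rightarrow> nat \<Rightarrow> nat set" where
  "slalom_proj m S n = (\<lambda>c. (from_nat c :: nat list) ! m) ` S n"

lemma slalom_proj_in_slaloms: "S \<in> slaloms \<Longrightarrow> slalom_proj m S \<in> slaloms"
  unfolding slalom_proj_def by (rule image_slalom_in_slaloms)

lemma in_star_slalom_proj:
  assumes "in_star (diag_code f) S"
  shows "in_star (f m) (slalom_proj m S)"
proof -
  obtain N where N: "\<And>n. n \<ge> N \<Longrightarrow> diag_code f n \<in> S n"
    using assms by (auto simp: in_star_def)
  have "f m n \<in> slalom_proj m S n" if "n \<ge> max N m" for n
  proof -
    have "(from_nat (diag_code f n) :: nat list) ! m = f m n"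
      using that by (simp add: diag_code_def del: upt_Suc)
    then show ?thesis
      unfolding slalom_proj_def using N[of n] that by force
  qed
  then show ?thesis
    unfolding in_star_def by blast
qed

lemma GT_morphism_exists_Cof_Inter_Lc_2id:
  fixes J :: "nat \<Rightarrow> 'x set set"
  assumes down_closed: "\<And>n A B. A \<in> J n \<Longrightarrow> B \<subseteq> A \<Longrightarrow> B \<in> J n"
    and component_morphisms: "\<And>m. GT_morphism_exists (Cof (J m)) Lc_2id"
  shows "GT_morphism_exists (Cof (\<Inter>n. J n)) Lc_2id"
proof -
  from component_morphisms have "\<forall>m. \<exists>\<phi> \<psi>. (\<forall>S\<in>slaloms. \<psi> S \<in> J m) \<and>
      (\<forall>A\<in>J m. \<forall>S\<in>slaloms. in_star (\<phi> A) S \<longrightarrow> A \<subseteq> \<psi> S)"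
    unfolding GT_morphism_exists_Cof_Lc_2id_iff by blast
  then obtain \<Phi> \<Psi> where
    \<Psi>_in: "\<And>m S. S \<in> slaloms \<Longrightarrow> \<Psi> m S \<in> J m" and
    \<Phi>\<Psi>: "\<And>m A S. A \<in> J m \<Longrightarrow> S \<in> slaloms \<Longrightarrow> in_star (\<Phi> m A) S \<Longrightarrow> A \<subseteq> \<Psi> m S"
    by metis
  define \<psi> where "\<psi> S = (\<Inter>m. \<Psi> m (slalom_proj m S))" for S
  have "\<psi> S \<in> (\<Inter>n. J n)" if "S \<in> slaloms" for S
  proof
    fix n
    have "\<Psi> n (slalom_proj n S) \<in> J n"
      using \<Psi>_in slalom_proj_in_slaloms[OF that] .
    then show "\<psi> S \<in> J n"
      by (rule down_closed) (auto simp: \<psi>_def)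
  qed
  moreover have "A \<subseteq> \<psi> S"
    if A: "A \<in> (\<Inter>n. J n)" and S: "S \<in> slaloms"
      and captured: "in_star (diag_code (\<lambda>m. \<Phi> m A)) S" for A S
  proof -
    have "A \<subseteq> \<Psi> m (slalom_proj m S)" for m
      using A slalom_proj_in_slaloms[OF S] in_star_slalom_proj[OF captured]
      by (intro \<Phi>\<Psi>) auto
    then show ?thesis
      by (auto simp: \<psi>_def)
  qed
  ultimately show ?thesis
    unfolding GT_morphism_exists_Cof_Lc_2id_iff
    by (intro exI[of _ "\<lambda>A. diag_code (\<lambda>m. \<Phi> m A)"] exI[of _ \<psi>] conjI ballI impI)
qed

theorem theorem4p4:
  fixes X :: "'x set" and Is :: "nat \<Rightarrow> 'x set set"
  assumes "\<And>n. sigma_ideal X (Is n)"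
    and "\<And>n. Is (Suc n) \<subseteq> Is n"
    and "\<And>m. GT_morphism_exists (Cof (Is m)) Lc_2id"
  shows "GT_morphism_exists (Cof (\<Inter>n. Is n)) Lc_2id"
proof (rule GT_morphism_exists_Cof_Inter_Lc_2id)
  show "\<And>n A B. A \<in> Is n \<Longrightarrow> B \<subseteq> A \<Longrightarrow> B \<in> Is n"
    using assms(1) unfolding sigma_ideal_def by blast
qed (fact assms(3))

end
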